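(* Let $X$ be a compact metric space, $G:X\to\mathcal{K}(X)$ a measurable set-valued map, $f\in C(X,\mathbb{R})$ and $\mathcal{U}$ a finite open cover of $X$. Then $$F:x\mapsto\inf\Big\{\sum_{V\in\mathcal{V}}\sup_{y\in V\cap G(x)}f(y):\ \mathcal{V}\in\mathcal{C}_X,\ \mathcal{V}\succeq\mathcal{U}\Big\}$$ is a Borel measurable map.
   Context: $\mathcal{K}(X)$ is the family of nonempty closed subsets of $X$ with the Hausdorff metric; $G$ is measurable if $\{x: G(x)\cap V\neq\emptyset\}$ is Borel for every closed (equivalently, open) $V\subseteq X$. $\mathcal{C}_X$ is the set of finite covers of $X$ by Borel sets; $\mathcal{V}\succeq\mathcal{U}$ means each element of $\mathcal{V}$ lies in some element of $\mathcal{U}$. Terms with $V\cap G(x)=\emptyset$ are omitted. *)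

theory Defs
  imports "HOL-Analysis.Analysis"
begin

text \<open>X is a compact subset of a metric space, regarded as a metric space itself;
Borel sets of X are the sets of the restricted Borel sigma-algebra.\<close>

definition borel_on :: "'a::metric_space set \<Rightarrow> 'a measure" where
  "borel_on X = restrict_space borel X"

definition setvalued_into_K :: "'a::metric_space set \<Rightarrow> ('a \<Rightarrow> 'a set) \<Rightarrow> bool" where
  "setvalued_into_K X G \<longleftrightarrow>
     (\<forall>x\<in>X. G x \<noteq> {} \<and> G x \<subseteq> X \<and> closedin (top_of_set X) (G x))"

definition measurable_multifun :: "'a::metric_space set \<Rightarrow> ('a \<Rightarrow> 'a set) \<Rightarrow> bool" where
  "measurable_multifun X G \<longleftrightarrow>
     (\<forall>V. closedin (top_of_set X) V \<longrightarrow> {x\<in>X. G x \<inter> V \<noteq> {}} \<in> sets (borel_on X))"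

definition borel_covers :: "'a::metric_space set \<Rightarrow> 'a set set set" where
  "borel_covers X = {\<V>. finite \<V> \<and> \<V> \<subseteq> sets (borel_on X) \<and> \<Union>\<V> = X}"

definition finite_open_cover :: "'a::metric_space set \<Rightarrow> 'a set set \<Rightarrow> bool" where
  "finite_open_cover X \<U> \<longleftrightarrow> finite \<U> \<and> (\<forall>U\<in>\<U>. openin (top_of_set X) U) \<and> \<Union>\<U> = X"

definition refines :: "'a set set \<Rightarrow> 'a set set \<Rightarrow> bool" (infix "\<succeq>\<^sub>c" 50) where
  "\<V> \<succeq>\<^sub>c \<U> \<longleftrightarrow> (\<forall>V\<in>\<V>. \<exists>U\<in>\<U>. V \<subseteq> U)"

text \<open>The function F, valued in the extended reals (the infimum may be -infinity);
terms with V inter G(x) empty are omitted (contribute 0).\<close>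
definition Ffun :: "'a::metric_space set \<Rightarrow> ('a \<Rightarrow> 'a set) \<Rightarrow> ('a \<Rightarrow> real) \<Rightarrow> 'a set set
                    \<Rightarrow> 'a \<Rightarrow> ereal" where
  "Ffun X G f \<U> x = Inf {(\<Sum>V\<in>\<V>. if V \<inter> G x = {} then 0 else ereal (Sup (f ` (V \<inter> G x))))
                         | \<V>. \<V> \<in> borel_covers X \<and> \<V> \<succeq>\<^sub>c \<U>}"

end

theory Submission
  imports Defs
begin

text \<open>Only countably many covers matter. Let \<open>\<A>\<close> be the countable algebra generated by
\<open>\<U>\<close>, the sublevel sets \<open>{f < q}\<close> with \<open>q\<close> rational, and countably many relatively open sets
that form arbitrarily small neighbourhoods of every point; its members are \<open>F\<^sub>\<sigma>\<close>. For
\<open>A \<in> \<A>\<close> the map \<open>x \<mapsto> sup f(A \<inter> G x)\<close> is Borel, since its superlevel sets are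
Boolean combinations of lower inverses of \<open>F\<^sub>\<sigma>\<close> sets. Conversely, fix \<open>K = G x\<close>, a Borel cover
\<open>\<V> \<succeq> \<U>\<close> and \<open>\<delta> > 0\<close>. Cut \<open>X\<close> into the atoms of \<open>\<V>\<close> (points with the same
membership pattern) and rebuild a partition of \<open>X\<close> by members of \<open>\<A>\<close>, one cell per atom,
such that each cell lies in every member of \<open>\<U>\<close> containing its atom, meets \<open>K\<close> only where
\<open>f\<close> is less than \<open>\<delta>\<close> above its supremum on the atom's part of \<open>K\<close>, and contains a point of
its atom (in \<open>K\<close> if possible). Replacing each \<open>V \<in> \<V>\<close> by the union of the cells of the atoms
inside \<open>V\<close> gives a cover from \<open>\<A>\<close> refining \<open>\<U>\<close> whose sum exceeds that of \<open>\<V>\<close> by at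
most \<open>\<delta>\<close> per member. Hence \<open>F\<close> is an infimum over countably many covers, each contributing
a Borel function.\<close>

section \<open>Suprema over traces\<close>

definition trace_sup :: "('a \<Rightarrow> real) \<Rightarrow> 'a set \<Rightarrow> 'a set \<Rightarrow> real" where
  "trace_sup f K V = (if V \<inter> K = {} then 0 else Sup (f ` (V \<inter> K)))"

lemma less_trace_sup_iff:
  fixes f :: "'a \<Rightarrow> real"
  assumes "bdd_above (f ` (A \<inter> K))"
  shows "a < trace_sup f K A \<longleftrightarrow> (A \<inter> K = {} \<and> a < 0) \<or> (\<exists>y\<in>A \<inter> K. a < f y)"
  using assms by (auto simp: trace_sup_def less_cSup_iff)

lemma bdd_above_continuous_image_subset:
  fixes f :: "'a::metric_space \<Rightarrow> real"
  assumes "compact X" "continuous_on X f" "S \<subseteq> X"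
  shows "bdd_above (f ` S)"
  using assms
  by (meson bdd_above_mono bounded_imp_bdd_above compact_continuous_image compact_imp_bounded image_mono)

lemma space_borel_on [simp]: "space (borel_on X) = X"
  by (simp add: borel_on_def space_restrict_space)

lemma fsigma_in_sets_borel_on:
  fixes X :: "'a::metric_space set"
  assumes "closed X" "fsigma_in (top_of_set X) A"
  shows "A \<in> sets (borel_on X)"
proof -
  obtain \<T> where \<T>: "countable \<T>" "\<And>C. C \<in> \<T> \<Longrightarrow> closedin (top_of_set X) C" "\<Union>\<T> = A"
    using assms(2) unfolding fsigma_in_def union_of_def by auto
  have "C \<in> sets (borel_on X)" if "C \<in> \<T>" for C
    using \<T>(2)[OF that] assms(1) closedin_closed_trans closedin_imp_subset
    by (fastforce simp: borel_on_def sets_restrict_space_iff)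
  then show ?thesis
    using \<T>(1,3) by (metis sets.countable_Union subsetI)
qed

lemma lower_inverse_in_sets_borel_on:
  assumes "measurable_multifun X G" "fsigma_in (top_of_set X) B"
  shows "{x\<in>X. G x \<inter> B \<noteq> {}} \<in> sets (borel_on X)"
proof -
  obtain \<T> where \<T>: "countable \<T>" "\<And>C. C \<in> \<T> \<Longrightarrow> closedin (top_of_set X) C" "\<Union>\<T> = B"
    using assms(2) unfolding fsigma_in_def union_of_def by auto
  have "{x\<in>X. G x \<inter> B \<noteq> {}} = (\<Union>C\<in>\<T>. {x\<in>X. G x \<inter> C \<noteq> {}})"
    using \<T>(3) by blast
  also have "\<dots> \<in> sets (borel_on X)"
    using \<T>(1,2) assms(1) unfolding measurable_multifun_def by (intro sets.countable_UN') auto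
  finally show ?thesis .
qed

lemma trace_sup_measurable:
  fixes X :: "'a::metric_space set" and f :: "'a \<Rightarrow> real"
  assumes X: "compact X" and G: "setvalued_into_K X G" and mG: "measurable_multifun X G"
    and f: "continuous_on X f" and A: "fsigma_in (top_of_set X) A"
  shows "(\<lambda>x. trace_sup f (G x) A) \<in> borel_measurable (borel_on X)"
proof (rule borel_measurableI_greater)
  fix a :: real
  define L where "L B = {x\<in>X. G x \<inter> B \<noteq> {}}" for B
  define Q where "Q = {y\<in>X. a < f y}"
  have "openin (top_of_set X) Q"
    using continuous_openin_preimage_gen[OF f open_greaterThan, of a]
    by (simp add: Q_def vimage_def Int_def conj_commute)
  then have AQ: "fsigma_in (top_of_set X) (A \<inter> Q)"
    by (intro fsigma_in_Int A open_imp_fsigma_in metrizable_space_subtopology metrizable_space_euclidean)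
  have "a < trace_sup f (G x) A \<longleftrightarrow> (x \<notin> L A \<and> a < 0) \<or> x \<in> L (A \<inter> Q)" if "x \<in> X" for x
  proof -
    have "G x \<subseteq> X" using G that by (auto simp: setvalued_into_K_def)
    then show ?thesis
      using less_trace_sup_iff[OF bdd_above_continuous_image_subset[OF X f], of A "G x" a] that by (auto simp: L_def Q_def)
  qed
  then have eq: "{x \<in> space (borel_on X). a < trace_sup f (G x) A} = (if a < 0 then X - L A else {}) \<union> L (A \<inter> Q)"
    by (auto simp: L_def)
  have "L A \<in> sets (borel_on X)" "L (A \<inter> Q) \<in> sets (borel_on X)"
    unfolding L_def using lower_inverse_in_sets_borel_on[OF mG] A AQ by auto
  moreover have "X \<in> sets (borel_on X)"
    using sets.top[of "borel_on X"] by simp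
  ultimately show "{x \<in> space (borel_on X). a < trace_sup f (G x) A} \<in> sets (borel_on X)"
    unfolding eq by auto
qed

section \<open>A countable algebra of \<open>F\<^sub>\<sigma>\<close> sets\<close>

datatype set_term = Gen nat | Cpl set_term | Join set_term set_term

instance set_term :: countable
  by countable_datatype

primrec eval_set :: "'a set \<Rightarrow> (nat \<Rightarrow> 'a set) \<Rightarrow> set_term \<Rightarrow> 'a set" where
  "eval_set X g (Gen n) = X \<inter> g n"
| "eval_set X g (Cpl t) = X - eval_set X g t"
| "eval_set X g (Join t u) = eval_set X g t \<union> eval_set X g u"

lemma eval_set_subset: "eval_set X g t \<subseteq> X"
  by (induction t) auto

lemma algebra_range_eval_set: "algebra X (range (eval_set X g))"
  unfolding algebra_iff_Un
proof (intro conjI ballI)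
  show "range (eval_set X g) \<subseteq> Pow X"
    by (simp add: image_subset_iff eval_set_subset)
  have "eval_set X g (Cpl (Join (Gen 0) (Cpl (Gen 0)))) = {}" by auto
  then show "{} \<in> range (eval_set X g)" by (metis rangeI)
  fix A B assume "A \<in> range (eval_set X g)" "B \<in> range (eval_set X g)"
  then obtain t u where "A = eval_set X g t" "B = eval_set X g u" by auto
  then have "X - A = eval_set X g (Cpl t)" "A \<union> B = eval_set X g (Join t u)" by simp_all
  then show "X - A \<in> range (eval_set X g)" "A \<union> B \<in> range (eval_set X g)"
    by (metis rangeI)+
qed

text \<open>\<open>F\<^sub>\<sigma>\<close> sets alone are not closed under complement; sets that are both \<open>F\<^sub>\<sigma>\<close> and
  \<open>G\<^sub>\<delta>\<close> are.\<close>

lemma eval_set_fsigma_gdelta: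
  fixes X :: "'a::metric_space set"
  assumes "\<And>n. openin (top_of_set X) (g n)"
  shows "fsigma_in (top_of_set X) (eval_set X g t) \<and> gdelta_in (top_of_set X) (eval_set X g t)"
proof (induction t)
  case (Gen n)
  have "openin (top_of_set X) (X \<inter> g n)"
    using assms[of n] by (metis openin_imp_subset inf.absorb2)
  then show ?case
    by (simp add: open_imp_fsigma_in open_imp_gdelta_in metrizable_space_subtopology metrizable_space_euclidean)
next
  case (Cpl t)
  then show ?case
    using fsigma_in_diff[of "top_of_set X" X] gdelta_in_diff[of "top_of_set X" X]
      fsigma_in_topspace[of "top_of_set X"] gdelta_in_topspace[of "top_of_set X"]
    by simp
next
  case (Join t u)
  then show ?case by (simp add: fsigma_in_Un gdelta_in_Un)
qed

lemma countable_algebra_generated_by_opens: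
  fixes X :: "'a::metric_space set"
  assumes "countable \<G>" "\<And>G. G \<in> \<G> \<Longrightarrow> openin (top_of_set X) G"
  obtains \<A> where "countable \<A>" "algebra X \<A>" "\<G> \<subseteq> \<A>" "\<And>A. A \<in> \<A> \<Longrightarrow> fsigma_in (top_of_set X) A"
proof
  define g where "g = from_nat_into (insert {} \<G>)"
  have g: "g n \<in> insert {} \<G>" for n
    unfolding g_def by (rule from_nat_into) simp
  have open_g: "openin (top_of_set X) (g n)" for n
    using g[of n] assms(2) by (metis insertE openin_empty)
  show "countable (range (eval_set X g))" by simp
  show "algebra X (range (eval_set X g))" by (rule algebra_range_eval_set)
  show "\<G> \<subseteq> range (eval_set X g)"
  proof
    fix G assume "G \<in> \<G>"
    then obtain n where "g n = G"
      using from_nat_into_surj[of "insert {} \<G>" G] assms(1) unfolding g_def by auto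
    moreover have "G \<subseteq> X"
      using assms(2)[OF \<open>G \<in> \<G>\<close>] by (rule openin_imp_subset)
    ultimately have "eval_set X g (Gen n) = G" by auto
    then show "G \<in> range (eval_set X g)" by (metis rangeI)
  qed
  show "fsigma_in (top_of_set X) A" if "A \<in> range (eval_set X g)" for A
    using that eval_set_fsigma_gdelta[where g=g, OF open_g] by blast
qed

lemma compact_countable_neighbourhoods:
  fixes X :: "'a::metric_space set"
  assumes "compact X"
  obtains \<B> where "countable \<B>" "\<And>B. B \<in> \<B> \<Longrightarrow> openin (top_of_set X) B"
    "\<And>y r. y \<in> X \<Longrightarrow> r > 0 \<Longrightarrow> \<exists>B\<in>\<B>. y \<in> B \<and> B \<subseteq> ball y r"
proof -
  have "\<forall>n. \<exists>k. finite k \<and> k \<subseteq> X \<and> X \<subseteq> (\<Union>d\<in>k. ball d (inverse (real (Suc n))))"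
    using seq_compact_imp_totally_bounded[OF compact_imp_seq_compact[OF assms]] by simp
  then obtain k where k: "\<And>n. finite (k n) \<and> X \<subseteq> (\<Union>d\<in>k n. ball d (inverse (real (Suc n))))"
    by metis
  define \<B> where "\<B> = (\<Union>n. (\<lambda>d. X \<inter> ball d (inverse (real (Suc n)))) ` k n)"
  show thesis
  proof
    show "countable \<B>"
      unfolding \<B>_def using k by (intro countable_UN) (auto intro: countable_finite)
    show "openin (top_of_set X) B" if "B \<in> \<B>" for B
      using that by (auto simp: \<B>_def openin_open_Int)
    show "\<exists>B\<in>\<B>. y \<in> B \<and> B \<subseteq> ball y r" if y: "y \<in> X" and r: "r > 0" for y r
    proof -
      obtain n where n: "inverse (real (Suc n)) < r / 2"
        using reals_Archimedean[of "r / 2"] r by auto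
      obtain d where d: "d \<in> k n" "dist d y < inverse (real (Suc n))"
        using k[of n] y by auto
      have "X \<inter> ball d (inverse (real (Suc n))) \<subseteq> ball y r"
      proof
        fix z assume "z \<in> X \<inter> ball d (inverse (real (Suc n)))"
        then have "dist d z < inverse (real (Suc n))" by simp
        moreover have "dist y z \<le> dist d y + dist d z" by (rule dist_triangle3)
        ultimately have "dist y z < r" using d(2) n by linarith
        then show "z \<in> ball y r" by simp
      qed
      moreover have "X \<inter> ball d (inverse (real (Suc n))) \<in> \<B>"
        using d(1) by (auto simp: \<B>_def)
      moreover have "y \<in> X \<inter> ball d (inverse (real (Suc n)))" using y d(2) by simp
      ultimately show ?thesis by blast
    qed
  qed
qed

definition adapted_algebra :: "'a::metric_space set \<Rightarrow> ('a \<Rightarrow> real) \<Rightarrow> 'a set set \<Rightarrow> 'a set set \<Rightarrow> bool" where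
  "adapted_algebra X f \<U> \<A> \<longleftrightarrow> algebra X \<A> \<and> \<U> \<subseteq> \<A> \<and> (\<forall>q\<in>\<rat>. {y\<in>X. f y < q} \<in> \<A>) \<and>
     (\<forall>y\<in>X. \<forall>r>0. \<exists>D\<in>\<A>. y \<in> D \<and> D \<subseteq> ball y r)"

lemma exists_countable_adapted_algebra:
  fixes X :: "'a::metric_space set" and f :: "'a \<Rightarrow> real"
  assumes X: "compact X" and f: "continuous_on X f" and \<U>: "finite_open_cover X \<U>"
  obtains \<A> where "countable \<A>" "adapted_algebra X f \<U> \<A>"
    "\<And>A. A \<in> \<A> \<Longrightarrow> fsigma_in (top_of_set X) A"
proof -
  obtain \<B> where \<B>: "countable \<B>" "\<And>B. B \<in> \<B> \<Longrightarrow> openin (top_of_set X) B"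
    "\<And>y r. y \<in> X \<Longrightarrow> r > 0 \<Longrightarrow> \<exists>B\<in>\<B>. y \<in> B \<and> B \<subseteq> ball y r"
    using compact_countable_neighbourhoods[OF X] by blast
  define \<G> where "\<G> = \<U> \<union> (\<lambda>q. {y \<in> X. f y < q}) ` \<rat> \<union> \<B>"
  have "countable \<G>"
    using \<U> \<B>(1) countable_rat by (auto simp: \<G>_def finite_open_cover_def intro: countable_finite)
  moreover have "openin (top_of_set X) G" if "G \<in> \<G>" for G
  proof -
    have "openin (top_of_set X) {y \<in> X. f y < q}" for q
      using continuous_openin_preimage_gen[OF f open_lessThan, of q]
      by (simp add: vimage_def Int_def conj_commute)
    then show ?thesis
      using that \<U> \<B>(2) by (auto simp: \<G>_def finite_open_cover_def)
  qed
  ultimately obtain \<A> where \<A>: "countable \<A>" "algebra X \<A>" "\<G> \<subseteq> \<A>"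
    "\<And>A. A \<in> \<A> \<Longrightarrow> fsigma_in (top_of_set X) A"
    using countable_algebra_generated_by_opens by blast
  have "adapted_algebra X f \<U> \<A>"
    unfolding adapted_algebra_def
  proof (intro conjI ballI allI impI)
    show "algebra X \<A>" by (fact \<A>(2))
    show "\<U> \<subseteq> \<A>" using \<A>(3) by (auto simp: \<G>_def)
    show "{y \<in> X. f y < q} \<in> \<A>" if "q \<in> \<rat>" for q
      using \<A>(3) that by (auto simp: \<G>_def)
    fix y r assume "y \<in> X" "(r::real) > 0"
    then obtain B where "B \<in> \<B>" "y \<in> B" "B \<subseteq> ball y r" using \<B>(3) by blast
    moreover have "B \<in> \<A>" using \<A>(3) \<open>B \<in> \<B>\<close> by (auto simp: \<G>_def)
    ultimately show "\<exists>D\<in>\<A>. y \<in> D \<and> D \<subseteq> ball y r" by blast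
  qed
  then show thesis using that \<A>(1,4) by blast
qed

lemma algebra_disjoint_refinement:
  assumes "algebra X M" "finite I" "\<And>i. i \<in> I \<Longrightarrow> C i \<in> M"
  shows "\<exists>P. (\<forall>i\<in>I. P i \<in> M \<and> P i \<subseteq> C i) \<and> disjoint_family_on P I \<and> \<Union>(P ` I) = \<Union>(C ` I)"
  using assms(2,3)
proof (induction I rule: finite_induct)
  case empty
  show ?case by (auto simp: disjoint_family_on_def)
next
  case (insert i I)
  interpret algebra X M by fact
  obtain P where P: "\<forall>j\<in>I. P j \<in> M \<and> P j \<subseteq> C j" "disjoint_family_on P I" "\<Union>(P ` I) = \<Union>(C ` I)"
    using insert by auto
  define P' where "P' j = (if j = i then C i else P j - C i)" for j
  have "\<forall>j\<in>insert i I. P' j \<in> M \<and> P' j \<subseteq> C j"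
    using P(1) insert by (auto simp: P'_def)
  moreover have "disjoint_family_on P' (insert i I)"
    using P(2) insert(2) by (auto simp: P'_def disjoint_family_on_def)
  moreover have "\<Union>(P' ` insert i I) = \<Union>(C ` insert i I)"
    using P(3) insert(2) by (auto simp: P'_def split: if_splits)
  ultimately show ?case by blast
qed

lemma algebra_disjoint_refinement_containing:
  assumes alg: "algebra X M" and fin: "finite I"
    and sets: "\<And>i. i \<in> I \<Longrightarrow> D i \<in> M \<and> C i \<in> M \<and> D i \<subseteq> C i" and disj: "disjoint_family_on D I"
  obtains P where "\<And>i. i \<in> I \<Longrightarrow> P i \<in> M \<and> D i \<subseteq> P i \<and> P i \<subseteq> C i"
    "disjoint_family_on P I" "\<Union>(P ` I) = \<Union>(C ` I)"
proof -
  interpret algebra X M by fact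
  have CD: "C i - \<Union>(D ` I) \<in> M" if "i \<in> I" for i
    using sets that fin by auto
  obtain Q where Q: "\<forall>i\<in>I. Q i \<in> M \<and> Q i \<subseteq> C i - \<Union>(D ` I)" "disjoint_family_on Q I"
    "\<Union>(Q ` I) = (\<Union>i\<in>I. C i - \<Union>(D ` I))"
    using algebra_disjoint_refinement[OF alg fin, of "\<lambda>i. C i - \<Union>(D ` I)", OF CD] by blast
  show thesis
  proof
    show "D i \<union> Q i \<in> M \<and> D i \<subseteq> D i \<union> Q i \<and> D i \<union> Q i \<subseteq> C i" if "i \<in> I" for i
      using sets[OF that] Q(1) that by auto
    show "disjoint_family_on (\<lambda>i. D i \<union> Q i) I"
      unfolding disjoint_family_on_def
    proof (intro ballI impI)
      fix i j assume ij: "i \<in> I" "j \<in> I" "i \<noteq> j"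
      have "D i \<inter> D j = {}" "Q i \<inter> Q j = {}"
        using ij disj Q(2) by (auto dest: disjoint_family_onD)
      moreover have "D i \<inter> Q j = {}" "Q i \<inter> D j = {}"
        using Q(1) ij by blast+
      ultimately show "(D i \<union> Q i) \<inter> (D j \<union> Q j) = {}" by blast
    qed
    have "\<Union>(D ` I) \<subseteq> \<Union>(C ` I)"
      using sets by blast
    then show "(\<Union>i\<in>I. D i \<union> Q i) = \<Union>(C ` I)"
      using Q(3) by auto
  qed
qed

lemma exists_separating_radius:
  fixes c :: "'i \<Rightarrow> 'a::metric_space"
  assumes fin: "finite I" and inj: "inj_on c I"
    and nbhd: "\<And>i. i \<in> I \<Longrightarrow> openin (top_of_set X) (N i) \<and> c i \<in> N i"
  obtains r where "r > 0" "\<And>i. i \<in> I \<Longrightarrow> X \<inter> ball (c i) r \<subseteq> N i"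
    "\<And>i j. i \<in> I \<Longrightarrow> j \<in> I \<Longrightarrow> i \<noteq> j \<Longrightarrow> ball (c i) r \<inter> ball (c j) r = {}"
proof -
  have "\<forall>i\<in>I. \<exists>e>0. ball (c i) e \<inter> X \<subseteq> N i"
    using nbhd by (meson openin_contains_ball)
  then obtain e where e: "\<And>i. i \<in> I \<Longrightarrow> e i > 0 \<and> ball (c i) (e i) \<inter> X \<subseteq> N i"
    by metis
  define R where "R = insert 1 (e ` I \<union> (\<lambda>(i, j). dist (c i) (c j) / 2) ` (I \<times> I - Id))"
  have finR: "finite R"
    using fin by (auto simp: R_def)
  have "\<forall>a\<in>R. 0 < a"
    using e inj by (auto simp: R_def inj_on_eq_iff)
  then have pos: "Min R > 0"
    using finR by (simp add: Min_gr_iff R_def)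
  show thesis
  proof
    show "Min R > 0" by (fact pos)
    show "X \<inter> ball (c i) (Min R) \<subseteq> N i" if "i \<in> I" for i
    proof -
      have "Min R \<le> e i" using finR that by (intro Min_le) (auto simp: R_def)
      then show ?thesis using e[OF that] by auto
    qed
    show "ball (c i) (Min R) \<inter> ball (c j) (Min R) = {}" if "i \<in> I" "j \<in> I" "i \<noteq> j" for i j
    proof -
      have le: "Min R \<le> dist (c i) (c j) / 2"
        using finR that unfolding R_def by (intro Min_le insertI2 UnI2 image_eqI[where x="(i, j)"]) auto
      show ?thesis
      proof (rule ccontr)
        assume "ball (c i) (Min R) \<inter> ball (c j) (Min R) \<noteq> {}"
        then obtain z where "dist (c i) z < Min R" "dist (c j) z < Min R" by auto
        with le dist_triangle2[of "c i" "c j" z] show False by linarith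
      qed
    qed
  qed
qed

section \<open>Regrouping the atoms of a cover\<close>

definition cover_type :: "'a set set \<Rightarrow> 'a \<Rightarrow> 'a set set" where
  "cover_type \<V> y = {V \<in> \<V>. y \<in> V}"

text \<open>Atoms of \<open>\<V>\<close> are indexed by their cover types; \<open>V \<in> S\<close> says that the atom of type
  \<open>S\<close> lies in \<open>V\<close>, so \<open>regroup P \<S> V\<close> collects the new cells of the atoms inside \<open>V\<close>.\<close>

definition regroup :: "('b set \<Rightarrow> 'a set) \<Rightarrow> 'b set set \<Rightarrow> 'b \<Rightarrow> 'a set" where
  "regroup P \<S> V = \<Union>(P ` {S \<in> \<S>. V \<in> S})"

lemma mem_regroup_iff:
  assumes "disjoint_family_on P \<S>" "S \<in> \<S>" "z \<in> P S"
  shows "z \<in> regroup P \<S> V \<longleftrightarrow> V \<in> S"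
  using assms by (auto simp: regroup_def dest: disjoint_family_onD)

lemma inj_on_regroup:
  assumes disj: "disjoint_family_on P \<S>" and types: "cover_type \<V> ` X \<subseteq> \<S>"
    and rep: "\<And>S. S \<in> \<S> \<Longrightarrow> c S \<in> P S" and sub: "\<And>V. V \<in> \<V> \<Longrightarrow> V \<subseteq> X"
  shows "inj_on (regroup P \<S>) \<V>"
proof (rule inj_onI)
  fix V V' assume V: "V \<in> \<V>" "V' \<in> \<V>" and eq: "regroup P \<S> V = regroup P \<S> V'"
  have "y \<in> V \<longleftrightarrow> y \<in> V'" if "y \<in> X" for y
  proof -
    have S: "cover_type \<V> y \<in> \<S>" using types that by blast
    have "y \<in> V \<longleftrightarrow> c (cover_type \<V> y) \<in> regroup P \<S> V"
      using mem_regroup_iff[OF disj S rep[OF S]] V by (simp add: cover_type_def)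
    also have "\<dots> \<longleftrightarrow> y \<in> V'"
      using mem_regroup_iff[OF disj S rep[OF S]] V eq by (simp add: cover_type_def)
    finally show ?thesis .
  qed
  then show "V = V'" using sub V by blast
qed

lemma Union_regroup:
  assumes "\<And>S. S \<in> \<S> \<Longrightarrow> S \<inter> \<V> \<noteq> {}"
  shows "\<Union>(regroup P \<S> ` \<V>) = \<Union>(P ` \<S>)"
  using assms unfolding regroup_def by blast

lemma regroup_refines:
  assumes "\<V> \<succeq>\<^sub>c \<U>" and "\<And>S V U. S \<in> \<S> \<Longrightarrow> V \<in> S \<Longrightarrow> U \<in> \<U> \<Longrightarrow> V \<subseteq> U \<Longrightarrow> P S \<subseteq> U"
  shows "regroup P \<S> ` \<V> \<succeq>\<^sub>c \<U>"
  unfolding refines_def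
proof
  fix W assume "W \<in> regroup P \<S> ` \<V>"
  then obtain V where V: "V \<in> \<V>" "W = regroup P \<S> V" by blast
  then obtain U where U: "U \<in> \<U>" "V \<subseteq> U" using assms(1) by (auto simp: refines_def)
  then have "W \<subseteq> U" using V assms(2) by (force simp: regroup_def)
  then show "\<exists>U\<in>\<U>. W \<subseteq> U" using U by blast
qed

lemma trace_sup_regroup_le:
  fixes f :: "'a \<Rightarrow> real"
  assumes disj: "disjoint_family_on P \<S>" and types: "cover_type \<V> ` X \<subseteq> \<S>"
    and rep: "\<And>S. S \<in> \<S> \<Longrightarrow> c S \<in> P S"
    and rep_K: "\<And>y. y \<in> K \<Longrightarrow> c (cover_type \<V> y) \<in> K"
    and control: "\<And>S z. S \<in> \<S> \<Longrightarrow> z \<in> P S \<inter> K \<Longrightarrow> \<exists>y\<in>K. cover_type \<V> y = S \<and> f z \<le> f y + \<delta>"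
    and KX: "K \<subseteq> X" and bdd: "bdd_above (f ` K)" and "\<delta> \<ge> 0" and V: "V \<in> \<V>"
  shows "trace_sup f K (regroup P \<S> V) \<le> trace_sup f K V + \<delta>"
proof (cases "V \<inter> K = {}")
  case True
  have "regroup P \<S> V \<inter> K = {}"
  proof (rule ccontr)
    assume "regroup P \<S> V \<inter> K \<noteq> {}"
    then obtain z S where "S \<in> \<S>" "V \<in> S" "z \<in> P S \<inter> K" by (auto simp: regroup_def)
    then obtain y where "y \<in> K" "V \<in> cover_type \<V> y" using control by blast
    then show False using True by (auto simp: cover_type_def)
  qed
  then show ?thesis using True \<open>\<delta> \<ge> 0\<close> by (simp add: trace_sup_def)
next
  case False
  then obtain y0 where y0: "y0 \<in> V" "y0 \<in> K" by blast
  have S: "cover_type \<V> y0 \<in> \<S>" using types y0 KX by blast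
  have "c (cover_type \<V> y0) \<in> regroup P \<S> V \<inter> K"
    using mem_regroup_iff[OF disj S rep[OF S]] y0 rep_K V by (simp add: cover_type_def)
  then have ne: "regroup P \<S> V \<inter> K \<noteq> {}" by blast
  have "Sup (f ` (regroup P \<S> V \<inter> K)) \<le> Sup (f ` (V \<inter> K)) + \<delta>"
  proof (rule cSup_least)
    show "f ` (regroup P \<S> V \<inter> K) \<noteq> {}" using ne by simp
    fix t assume "t \<in> f ` (regroup P \<S> V \<inter> K)"
    then obtain z S where z: "t = f z" "S \<in> \<S>" "V \<in> S" "z \<in> P S \<inter> K"
      by (auto simp: regroup_def)
    then obtain y where y: "y \<in> K" "cover_type \<V> y = S" "f z \<le> f y + \<delta>"
      using control by blast
    have "f y \<le> Sup (f ` (V \<inter> K))"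
      using y z bdd by (intro cSup_upper) (auto simp: cover_type_def intro: bdd_above_mono)
    then show "t \<le> Sup (f ` (V \<inter> K)) + \<delta>" using y z by linarith
  qed
  then show ?thesis using ne False by (simp add: trace_sup_def)
qed

section \<open>Approximating a cover inside an adapted algebra\<close>

locale cover_approximation =
  fixes X :: "'a::metric_space set" and f :: "'a \<Rightarrow> real" and \<U> \<A> \<V> :: "'a set set"
    and K :: "'a set" and \<delta> :: real
  assumes compact_X: "compact X" and continuous_f: "continuous_on X f"
    and open_cover: "finite_open_cover X \<U>" and adapted: "adapted_algebra X f \<U> \<A>"
    and closed_K: "closed K" and K_subset: "K \<subseteq> X"
    and finite_\<V>: "finite \<V>" and covers_\<V>: "\<Union>\<V> = X" and refines_\<V>: "\<V> \<succeq>\<^sub>c \<U>"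
    and \<delta>_pos: "\<delta> > 0"
begin

lemma algebra_\<A>: "algebra X \<A>"
  using adapted by (simp add: adapted_algebra_def)

lemma bdd_above_f: "S \<subseteq> X \<Longrightarrow> bdd_above (f ` S)"
  by (rule bdd_above_continuous_image_subset[OF compact_X continuous_f])

definition types :: "'a set set set" where
  "types = cover_type \<V> ` X"

definition atom :: "'a set set \<Rightarrow> 'a set" where
  "atom S = {y \<in> X. cover_type \<V> y = S}"

definition envelope :: "'a set set \<Rightarrow> 'a set" where
  "envelope S = X \<inter> \<Inter>{U \<in> \<U>. atom S \<subseteq> U}"

lemma finite_types: "finite types"
  unfolding types_def
  by (rule finite_subset[of _ "Pow \<V>"]) (auto simp: cover_type_def finite_\<V>)

lemma mem_atom_cover_type: "y \<in> X \<Longrightarrow> y \<in> atom (cover_type \<V> y)"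
  by (simp add: atom_def)

lemma atom_subset: "V \<in> S \<Longrightarrow> atom S \<subseteq> V"
  by (auto simp: atom_def cover_type_def)

lemma atom_subset_envelope: "atom S \<subseteq> envelope S"
  by (auto simp: envelope_def atom_def)

lemma envelope_subset: "V \<in> S \<Longrightarrow> U \<in> \<U> \<Longrightarrow> V \<subseteq> U \<Longrightarrow> envelope S \<subseteq> U"
  unfolding envelope_def using atom_subset[of V S] by blast

lemma envelope_eq_Inter: "envelope S = \<Inter>(insert X {U \<in> \<U>. atom S \<subseteq> U})"
  by (auto simp: envelope_def)

lemma envelope_in_algebra: "envelope S \<in> \<A>"
proof -
  interpret algebra X \<A> by (rule algebra_\<A>)
  have "(\<Inter>U\<in>insert X {U \<in> \<U>. atom S \<subseteq> U}. U) \<in> \<A>"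
    using open_cover adapted by (intro finite_INT) (auto simp: finite_open_cover_def adapted_algebra_def)
  then show ?thesis by (simp add: envelope_eq_Inter)
qed

lemma openin_envelope: "openin (top_of_set X) (envelope S)"
  unfolding envelope_eq_Inter
  using open_cover by (intro openin_Inter) (auto simp: finite_open_cover_def)

text \<open>A rational level keeps the sublevel set below it inside the countable algebra.\<close>

definition level :: "'a set set \<Rightarrow> real" where
  "level S = (SOME q. q \<in> \<rat> \<and> Sup (f ` (atom S \<inter> K)) < q \<and> q < Sup (f ` (atom S \<inter> K)) + \<delta>)"

lemma level: "level S \<in> \<rat> \<and> Sup (f ` (atom S \<inter> K)) < level S \<and> level S < Sup (f ` (atom S \<inter> K)) + \<delta>"
proof -
  have "\<exists>q. q \<in> \<rat> \<and> Sup (f ` (atom S \<inter> K)) < q \<and> q < Sup (f ` (atom S \<inter> K)) + \<delta>"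
    using Rats_dense_in_real[of "Sup (f ` (atom S \<inter> K))" "Sup (f ` (atom S \<inter> K)) + \<delta>"] \<delta>_pos
    by auto
  then show ?thesis
    unfolding level_def by (rule someI_ex)
qed

definition lower_part :: "'a set set \<Rightarrow> 'a set" where
  "lower_part S = (if atom S \<inter> K = {} then {} else envelope S \<inter> {y \<in> X. f y < level S})"

lemma lower_part_in_algebra: "lower_part S \<in> \<A>"
proof -
  interpret algebra X \<A> by (rule algebra_\<A>)
  show ?thesis
    using adapted level envelope_in_algebra by (auto simp: lower_part_def adapted_algebra_def)
qed

lemma openin_lower_part: "openin (top_of_set X) (lower_part S)"
proof -
  have "openin (top_of_set X) {y \<in> X. f y < level S}"
    using continuous_openin_preimage_gen[OF continuous_f open_lessThan, of "level S"]
    by (simp add: vimage_def Int_def conj_commute)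
  then show ?thesis
    using openin_envelope by (auto simp: lower_part_def)
qed

lemma lower_part_subset_envelope: "lower_part S \<subseteq> envelope S"
  by (simp add: lower_part_def)

lemma mem_lower_part:
  assumes "y \<in> K" shows "y \<in> lower_part (cover_type \<V> y)"
proof -
  have y: "y \<in> X" "y \<in> atom (cover_type \<V> y)" using assms K_subset mem_atom_cover_type by auto
  have "f y \<le> Sup (f ` (atom (cover_type \<V> y) \<inter> K))"
    using y assms by (intro cSup_upper bdd_above_f) (auto simp: atom_def)
  then have "f y < level (cover_type \<V> y)"
    using level by (meson le_less_trans)
  then show ?thesis
    using y assms atom_subset_envelope by (auto simp: lower_part_def)
qed

lemma lower_part_control:
  assumes "z \<in> lower_part S \<inter> K" shows "\<exists>y\<in>K. cover_type \<V> y = S \<and> f z \<le> f y + \<delta>"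
proof -
  have ne: "atom S \<inter> K \<noteq> {}" and "f z < level S"
    using assms by (auto simp: lower_part_def split: if_splits)
  then have "f z - \<delta> < Sup (f ` (atom S \<inter> K))"
    using level[of S] by linarith
  moreover have "bdd_above (f ` (atom S \<inter> K))"
    by (rule bdd_above_f) (auto simp: atom_def)
  ultimately obtain y where "y \<in> atom S \<inter> K" "f z - \<delta> < f y"
    using ne by (auto simp: less_cSup_iff)
  then show ?thesis by (auto simp: atom_def)
qed

definition rep :: "'a set set \<Rightarrow> 'a" where
  "rep S = (SOME y. y \<in> atom S \<and> (atom S \<inter> K \<noteq> {} \<longrightarrow> y \<in> K))"

lemma rep:
  assumes "S \<in> types" shows "rep S \<in> atom S" "atom S \<inter> K \<noteq> {} \<Longrightarrow> rep S \<in> K"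
proof -
  have "\<exists>y. y \<in> atom S \<and> (atom S \<inter> K \<noteq> {} \<longrightarrow> y \<in> K)"
    using assms mem_atom_cover_type by (auto simp: types_def)
  then have "rep S \<in> atom S \<and> (atom S \<inter> K \<noteq> {} \<longrightarrow> rep S \<in> K)"
    unfolding rep_def by (rule someI_ex)
  then show "rep S \<in> atom S" "atom S \<inter> K \<noteq> {} \<Longrightarrow> rep S \<in> K" by auto
qed

lemma cover_type_rep: "S \<in> types \<Longrightarrow> cover_type \<V> (rep S) = S"
  using rep(1) by (auto simp: atom_def)

lemma rep_in_K: "y \<in> K \<Longrightarrow> rep (cover_type \<V> y) \<in> K"
  using K_subset mem_atom_cover_type by (intro rep(2)) (auto simp: types_def)

lemma rep_mem_cell:
  assumes "S \<in> types" shows "rep S \<in> lower_part S \<union> (envelope S - K)"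
proof (cases "atom S \<inter> K = {}")
  case True
  then show ?thesis using rep(1)[OF assms] atom_subset_envelope by blast
next
  case False
  then have "rep S \<in> K" by (rule rep(2)[OF assms])
  then have "rep S \<in> lower_part (cover_type \<V> (rep S))" by (rule mem_lower_part)
  then show ?thesis using cover_type_rep[OF assms] by simp
qed

text \<open>Disjoint cells around the representatives make every representative end up in the cell of
  its own atom; this is what keeps regrouping injective and nonempty traces nonempty.\<close>

lemma exists_separated_cells:
  obtains D where "\<And>S. S \<in> types \<Longrightarrow> D S \<in> \<A> \<and> rep S \<in> D S \<and> D S \<subseteq> envelope S \<and> D S \<inter> K \<subseteq> lower_part S"
    "disjoint_family_on D types"
proof -
  interpret algebra X \<A> by (rule algebra_\<A>)
  define N where "N S = lower_part S \<union> (envelope S - K)" for S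
  have "openin (top_of_set X) (envelope S - K)" for S
    using openin_envelope closed_K by (simp add: Diff_eq openin_Int_open open_Compl)
  then have "openin (top_of_set X) (N S) \<and> rep S \<in> N S" if "S \<in> types" for S
    using openin_lower_part rep_mem_cell[OF that] by (simp add: N_def openin_Un)
  moreover have "inj_on rep types"
    using cover_type_rep by (metis inj_onI)
  ultimately obtain r where r: "r > 0" "\<And>S. S \<in> types \<Longrightarrow> X \<inter> ball (rep S) r \<subseteq> N S"
    "\<And>S S'. S \<in> types \<Longrightarrow> S' \<in> types \<Longrightarrow> S \<noteq> S' \<Longrightarrow> ball (rep S) r \<inter> ball (rep S') r = {}"
    using exists_separating_radius[OF finite_types] by metis
  have "\<forall>S\<in>types. \<exists>D\<in>\<A>. rep S \<in> D \<and> D \<subseteq> ball (rep S) r"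
    using adapted r(1) rep(1) by (auto simp: adapted_algebra_def atom_def)
  then obtain D where D: "\<And>S. S \<in> types \<Longrightarrow> D S \<in> \<A> \<and> rep S \<in> D S \<and> D S \<subseteq> ball (rep S) r"
    by metis
  show thesis
  proof
    show "D S \<in> \<A> \<and> rep S \<in> D S \<and> D S \<subseteq> envelope S \<and> D S \<inter> K \<subseteq> lower_part S"
      if "S \<in> types" for S
    proof -
      have "D S \<subseteq> N S" using D[OF that] r(2)[OF that] sets_into_space by blast
      then show ?thesis using D[OF that] lower_part_subset_envelope by (auto simp: N_def)
    qed
    show "disjoint_family_on D types"
      using D r(3) unfolding disjoint_family_on_def by blast
  qed
qed

lemma exists_partition:
  obtains P where "\<And>S. S \<in> types \<Longrightarrow> P S \<in> \<A>" "disjoint_family_on P types" "\<Union>(P ` types) = X"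
    "\<And>S. S \<in> types \<Longrightarrow> rep S \<in> P S \<and> P S \<subseteq> envelope S \<and> P S \<inter> K \<subseteq> lower_part S"
proof -
  obtain D where D: "\<And>S. S \<in> types \<Longrightarrow> D S \<in> \<A> \<and> rep S \<in> D S \<and> D S \<subseteq> envelope S \<and> D S \<inter> K \<subseteq> lower_part S"
    "disjoint_family_on D types"
    using exists_separated_cells by blast
  interpret algebra X \<A> by (rule algebra_\<A>)
  define C where "C S = D S \<union> lower_part S \<union> (envelope S - \<Union>(lower_part ` types))" for S
  have "\<Union>(lower_part ` types) \<in> \<A>"
    using finite_types lower_part_in_algebra by auto
  then have sets: "D S \<in> \<A> \<and> C S \<in> \<A> \<and> D S \<subseteq> C S" if "S \<in> types" for S
    using D(1)[OF that] lower_part_in_algebra envelope_in_algebra by (auto simp: C_def)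
  obtain P where P: "\<And>S. S \<in> types \<Longrightarrow> P S \<in> \<A> \<and> D S \<subseteq> P S \<and> P S \<subseteq> C S"
    "disjoint_family_on P types" "\<Union>(P ` types) = \<Union>(C ` types)"
    using algebra_disjoint_refinement_containing[OF algebra_\<A> finite_types sets D(2)] by blast
  have K: "K \<subseteq> \<Union>(lower_part ` types)"
    using mem_lower_part K_subset by (auto simp: types_def)
  show thesis
  proof
    show "\<Union>(P ` types) = X"
    proof
      show "\<Union>(P ` types) \<subseteq> X"
        using P(1) sets_into_space by blast
      have "X \<subseteq> \<Union>(envelope ` types)"
        using mem_atom_cover_type atom_subset_envelope by (auto simp: types_def)
      also have "\<dots> \<subseteq> \<Union>(C ` types)"
        unfolding C_def by auto
      finally show "X \<subseteq> \<Union>(P ` types)"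
        unfolding P(3) .
    qed
    fix S assume S: "S \<in> types"
    show "P S \<in> \<A>" using P(1)[OF S] by blast
    show "rep S \<in> P S \<and> P S \<subseteq> envelope S \<and> P S \<inter> K \<subseteq> lower_part S"
      using D(1)[OF S] P(1)[OF S] K lower_part_subset_envelope[of S] by (auto simp: C_def)
  qed (fact P(2))
qed

lemma exists_approximating_cover:
  obtains \<W> where "\<W> \<subseteq> \<A>" "finite \<W>" "\<Union>\<W> = X" "\<W> \<succeq>\<^sub>c \<U>"
    "(\<Sum>W\<in>\<W>. trace_sup f K W) \<le> (\<Sum>V\<in>\<V>. trace_sup f K V) + real (card \<V>) * \<delta>"
proof -
  interpret algebra X \<A> by (rule algebra_\<A>)
  obtain P where P: "\<And>S. S \<in> types \<Longrightarrow> P S \<in> \<A>" "disjoint_family_on P types" "\<Union>(P ` types) = X"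
    "\<And>S. S \<in> types \<Longrightarrow> rep S \<in> P S \<and> P S \<subseteq> envelope S \<and> P S \<inter> K \<subseteq> lower_part S"
    using exists_partition by blast
  have type_range: "cover_type \<V> ` X \<subseteq> types" by (simp add: types_def)
  have rep_P: "\<And>S. S \<in> types \<Longrightarrow> rep S \<in> P S" using P(4) by blast
  have VX: "\<And>V. V \<in> \<V> \<Longrightarrow> V \<subseteq> X" using covers_\<V> by blast
  have control: "\<exists>y\<in>K. cover_type \<V> y = S \<and> f z \<le> f y + \<delta>" if "S \<in> types" "z \<in> P S \<inter> K" for S z
    using P(4)[OF that(1)] that(2) lower_part_control by blast
  have le: "trace_sup f K (regroup P types V) \<le> trace_sup f K V + \<delta>" if "V \<in> \<V>" for V
    using trace_sup_regroup_le[OF P(2) type_range rep_P rep_in_K control K_subset bdd_above_f[OF K_subset]]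
      \<delta>_pos that by simp
  show thesis
  proof
    show "regroup P types ` \<V> \<subseteq> \<A>"
      using P(1) finite_types by (auto simp: regroup_def)
    show "finite (regroup P types ` \<V>)"
      using finite_\<V> by simp
    show "\<Union>(regroup P types ` \<V>) = X"
      using P(3) covers_\<V> by (subst Union_regroup) (auto simp: types_def cover_type_def)
    show "regroup P types ` \<V> \<succeq>\<^sub>c \<U>"
      using P(4) envelope_subset by (intro regroup_refines[OF refines_\<V>]) blast
    have "(\<Sum>W\<in>regroup P types ` \<V>. trace_sup f K W) = (\<Sum>V\<in>\<V>. trace_sup f K (regroup P types V))"
      using inj_on_regroup[OF P(2) type_range rep_P VX] by (simp add: sum.reindex)
    also have "\<dots> \<le> (\<Sum>V\<in>\<V>. trace_sup f K V + \<delta>)"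
      by (rule sum_mono) (rule le)
    also have "\<dots> = (\<Sum>V\<in>\<V>. trace_sup f K V) + real (card \<V>) * \<delta>"
      by (simp add: sum.distrib)
    finally show "(\<Sum>W\<in>regroup P types ` \<V>. trace_sup f K W) \<le> (\<Sum>V\<in>\<V>. trace_sup f K V) + real (card \<V>) * \<delta>" .
  qed
qed

end

section \<open>Measurability of \<open>F\<close>\<close>

lemma Ffun_eq_INF:
  "Ffun X G f \<U> x = (INF \<V>\<in>{\<V> \<in> borel_covers X. \<V> \<succeq>\<^sub>c \<U>}. ereal (\<Sum>V\<in>\<V>. trace_sup f (G x) V))"
proof -
  have "(if V \<inter> G x = {} then 0 else ereal (Sup (f ` (V \<inter> G x)))) = ereal (trace_sup f (G x) V)" for V
    by (simp add: trace_sup_def)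
  then show ?thesis
    by (simp add: Ffun_def sum_ereal setcompr_eq_image)
qed

lemma Ffun_eq_INF_adapted:
  fixes X :: "'a::metric_space set" and f :: "'a \<Rightarrow> real"
  assumes X: "compact X" and G: "setvalued_into_K X G" and f: "continuous_on X f"
    and \<U>: "finite_open_cover X \<U>" and \<A>: "adapted_algebra X f \<U> \<A>" "\<A> \<subseteq> sets (borel_on X)"
    and x: "x \<in> X"
  shows "Ffun X G f \<U> x = (INF \<V>\<in>{\<V> \<in> borel_covers X. \<V> \<subseteq> \<A> \<and> \<V> \<succeq>\<^sub>c \<U>}. ereal (\<Sum>V\<in>\<V>. trace_sup f (G x) V))"
    (is "_ = (INF \<V>\<in>?\<C>. ?H \<V>)")
  unfolding Ffun_eq_INF
proof (rule antisym)
  show "(INF \<V>\<in>{\<V> \<in> borel_covers X. \<V> \<succeq>\<^sub>c \<U>}. ?H \<V>) \<le> (INF \<V>\<in>?\<C>. ?H \<V>)"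
    by (rule INF_superset_mono) auto
  show "(INF \<V>\<in>?\<C>. ?H \<V>) \<le> (INF \<V>\<in>{\<V> \<in> borel_covers X. \<V> \<succeq>\<^sub>c \<U>}. ?H \<V>)"
  proof (rule INF_greatest)
    fix \<V> assume "\<V> \<in> {\<V> \<in> borel_covers X. \<V> \<succeq>\<^sub>c \<U>}"
    then have \<V>: "finite \<V>" "\<Union>\<V> = X" "\<V> \<succeq>\<^sub>c \<U>" by (auto simp: borel_covers_def)
    have K: "closed (G x)" "G x \<subseteq> X"
      using G x closedin_closed_trans[OF _ compact_imp_closed[OF X]] by (auto simp: setvalued_into_K_def)
    show "(INF \<V>\<in>?\<C>. ?H \<V>) \<le> ?H \<V>"
    proof (rule ereal_le_epsilon2)
      fix e :: real assume "e > 0"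
      define \<delta> where "\<delta> = e / (real (card \<V>) + 1)"
      have "\<delta> > 0" and card_\<delta>: "real (card \<V>) * \<delta> \<le> e"
        using \<open>e > 0\<close> by (auto simp: \<delta>_def field_simps)
      interpret cover_approximation X f \<U> \<A> \<V> "G x" \<delta>
        using X f \<U> \<A>(1) K \<V> \<open>\<delta> > 0\<close> by unfold_locales
      obtain \<W> where \<W>: "\<W> \<subseteq> \<A>" "finite \<W>" "\<Union>\<W> = X" "\<W> \<succeq>\<^sub>c \<U>"
        "(\<Sum>W\<in>\<W>. trace_sup f (G x) W) \<le> (\<Sum>V\<in>\<V>. trace_sup f (G x) V) + real (card \<V>) * \<delta>"
        using exists_approximating_cover by blast
      have "\<W> \<in> ?\<C>" using \<W> \<A>(2) by (auto simp: borel_covers_def)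
      then have "(INF \<V>\<in>?\<C>. ?H \<V>) \<le> ?H \<W>" by (rule INF_lower)
      also have "\<dots> \<le> ?H \<V> + ereal e" using \<W>(5) card_\<delta> by simp
      finally show "(INF \<V>\<in>?\<C>. ?H \<V>) \<le> ?H \<V> + ereal e" .
    qed
  qed
qed

theorem lemma4p1:
  fixes X :: "'a::metric_space set" and G :: "'a \<Rightarrow> 'a set" and f :: "'a \<Rightarrow> real"
    and \<U> :: "'a set set"
  assumes "compact X"
    and "setvalued_into_K X G"
    and "measurable_multifun X G"
    and "continuous_on X f"
    and "finite_open_cover X \<U>"
  shows "Ffun X G f \<U> \<in> borel_measurable (borel_on X)"
proof -
  obtain \<A> where \<A>: "countable \<A>" "adapted_algebra X f \<U> \<A>" "\<And>A. A \<in> \<A> \<Longrightarrow> fsigma_in (top_of_set X) A"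
    using exists_countable_adapted_algebra[OF assms(1,4,5)] by blast
  have \<A>_borel: "\<A> \<subseteq> sets (borel_on X)"
    using \<A>(3) fsigma_in_sets_borel_on[OF compact_imp_closed[OF assms(1)]] by blast
  define \<C> where "\<C> = {\<V> \<in> borel_covers X. \<V> \<subseteq> \<A> \<and> \<V> \<succeq>\<^sub>c \<U>}"
  have "countable \<C>"
    by (rule countable_subset[OF _ countable_Collect_finite_subset[OF \<A>(1)]])
       (auto simp: \<C>_def borel_covers_def)
  moreover have "(\<lambda>x. ereal (\<Sum>V\<in>\<V>. trace_sup f (G x) V)) \<in> borel_measurable (borel_on X)"
    if "\<V> \<in> \<C>" for \<V>
    using that \<A>(3) unfolding \<C>_def
    by (intro borel_measurable_ereal borel_measurable_sum trace_sup_measurable[OF assms(1-4)]) auto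
  ultimately have "(\<lambda>x. INF \<V>\<in>\<C>. ereal (\<Sum>V\<in>\<V>. trace_sup f (G x) V)) \<in> borel_measurable (borel_on X)"
    by (rule borel_measurable_INF)
  then show ?thesis
    using Ffun_eq_INF_adapted[OF assms(1,2,4,5) \<A>(2) \<A>_borel]
    by (subst measurable_cong) (auto simp: \<C>_def)
qed

end
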